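(* Let $G$ be the corresponding graph of an array $A$ with reach one, and let $F$ be a resulting DFS forest of $G$. Let $H'$ be obtained by merging the sub-trees of $F$; let $H_1,R_1$ be the graph and root list produced by the merge step on $H'$ with the list of roots of $F$, and $F_1$ the resulting DFS forest of $H_1$ with visiting list $R_1$; for $i>1$ let $H_i,R_i$ be produced by the merge step on $F_{i-1}$ with root list $R_{i-1}$, and $F_i$ the resulting DFS forest of $H_i$ with visiting list $R_i$. Then there exists a finite $i$ such that $F_i$ has exactly one component, i.e. is a tree (if $F$ itself has one component, $F$ is already such a tree).
   Context: An array is a finite sequence $A=(A[1],\dots,A[n])$ of pairwise distinct real numbers. A comparison graph on $A$ is a directed graph on $\{1,\dots,n\}$ all of whose arcs $(u,v)$ satisfy $A[u]<A[v]$. The corresponding graph of $A$ with reach one has an arc $(i,j)$ whenever $j\equiv i\pm1\pmod n$, $j\ne i$, and $A[i]<A[j]$. Components are connected components of the underlying undirected graph. DFS: adjacency lists sorted in increasing $A$-value; given a visiting list $(l_1,\dots,l_m)$ (for $F$, some ordering of all vertices), for each unvisited $l_t$ call Visit$(l_t)$, where Visit$(u)$ marks $u$ and, for each out-neighbour $w$ of $u$ in increasing $A$-value that is unvisited, sets parent$(w)=u$ and calls Visit$(w)$. The resulting DFS forest has arcs $(\mathrm{parent}(w),w)$; its roots are the vertices without parent. Merging the sub-trees of $F$: for each component of $F$ whose root has exactly two children $a_1,b_1$, set $p=a_1,q=b_1$ and, while both are defined: if $A[p]<A[q]$ add $(p,q)$ and replace $p$ by its smallest-valued child in $F$ (undefined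 if none); else add $(q,p)$ and replace $q$ likewise. Component merge of components $C,D$: set $p,q$ to the minimum-valued vertices of $C,D$; while both defined: if $A[p]<A[q]$ add $(p,q)$ and replace $p$ by the smallest-valued out-neighbour of $p$ within $C$ (ignoring arcs added in this merge; undefined if none); else add $(q,p)$ and replace $q$ analogously in $D$. Merge step with root list $(\rho_1,\dots,\rho_k)$ (the minimum-valued vertices of the components): component-merge the components of $\rho_{2j-1},\rho_{2j}$ for $j=1,\dots,\lfloor k/2\rfloor$ and return the list obtained by deleting the larger-valued root of each merged pair. *)

theory Defs
  imports Complex_Main
begin

text \<open>Vertices are 0..<n (the paper's 1..n shifted by one); a graph is a set of arcs.\<close>

definition reach1_graph :: "(nat \<Rightarrow> real) \<Rightarrow> nat \<Rightarrow> (nat \<times> nat) set" where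
  "reach1_graph A n = {(i, j). i < n \<and> j < n \<and> j \<noteq> i \<and>
      (j = (i + 1) mod n \<or> j = (i + n - 1) mod n) \<and> A i < A j}"

definition out_sorted :: "(nat \<Rightarrow> real) \<Rightarrow> nat \<Rightarrow> (nat \<times> nat) set \<Rightarrow> nat \<Rightarrow> nat list" where
  "out_sorted A n E u = sort_key A (filter (\<lambda>w. (u, w) \<in> E) [0..<n])"

text \<open>Visit(u), with a fuel argument (fuel Suc n is never exhausted, since the
  recursion depth is at most the number of vertices). State = (visited, tree arcs).\<close>
fun dfs_visit :: "nat \<Rightarrow> (nat \<Rightarrow> real) \<Rightarrow> nat \<Rightarrow> (nat \<times> nat) set \<Rightarrow> nat
      \<Rightarrow> nat set \<times> (nat \<times> nat) set \<Rightarrow> nat set \<times> (nat \<times> nat) set" where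
  "dfs_visit 0 A n E u st = st"
| "dfs_visit (Suc k) A n E u st =
     fold (\<lambda>w st'. if w \<in> fst st' then st'
                   else dfs_visit k A n E w (fst st', insert (u, w) (snd st')))
          (out_sorted A n E u) (insert u (fst st), snd st)"

text \<open>The DFS forest (set of arcs (parent w, w)) with visiting list L.\<close>
definition dfs_forest :: "(nat \<Rightarrow> real) \<Rightarrow> nat \<Rightarrow> (nat \<times> nat) set \<Rightarrow> nat list \<Rightarrow> (nat \<times> nat) set" where
  "dfs_forest A n E L = snd (fold (\<lambda>l st. if l \<in> fst st then st else dfs_visit (Suc n) A n E l st) L ({}, {}))"

definition dfs_roots :: "(nat \<times> nat) set \<Rightarrow> nat list \<Rightarrow> nat list" where
  "dfs_roots T L = filter (\<lambda>l. \<forall>p. (p, l) \<notin> T) L"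

definition minv :: "(nat \<Rightarrow> real) \<Rightarrow> nat set \<Rightarrow> nat" where
  "minv A S = arg_min_on A S"

definition min_out :: "(nat \<Rightarrow> real) \<Rightarrow> (nat \<times> nat) set \<Rightarrow> nat set \<Rightarrow> nat \<Rightarrow> nat option" where
  "min_out A E C p = (let S = {w \<in> C. (p, w) \<in> E} in if S = {} then None else Some (minv A S))"

text \<open>Fuel: each iteration advances one pointer to a strictly larger value
  inside C or D, so fuel 2n+2 is never exhausted.\<close>
fun zip_merge :: "nat \<Rightarrow> (nat \<Rightarrow> real) \<Rightarrow> (nat \<times> nat) set \<Rightarrow> nat set \<Rightarrow> nat set
      \<Rightarrow> nat option \<Rightarrow> nat option \<Rightarrow> (nat \<times> nat) set" where
  "zip_merge (Suc k) A E C D (Some p) (Some q) =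
     (if A p < A q then insert (p, q) (zip_merge k A E C D (min_out A E C p) (Some q))
      else insert (q, p) (zip_merge k A E C D (Some p) (min_out A E D q)))"
| "zip_merge _ A E C D _ _ = {}"

definition children :: "(nat \<times> nat) set \<Rightarrow> nat \<Rightarrow> nat set" where
  "children F r = {w. (r, w) \<in> F}"

definition merge_subtrees :: "(nat \<Rightarrow> real) \<Rightarrow> nat \<Rightarrow> (nat \<times> nat) set \<Rightarrow> (nat \<times> nat) set" where
  "merge_subtrees A n F = F \<union>
     (\<Union>r \<in> {r. r < n \<and> (\<forall>p. (p, r) \<notin> F) \<and> card (children F r) = 2}.
        (let a = minv A (children F r); b = arg_max_on A (children F r) in
         zip_merge (2 * n + 2) A F {..<n} {..<n} (Some a) (Some b)))"

definition ucomp :: "nat \<Rightarrow> (nat \<times> nat) set \<Rightarrow> nat \<Rightarrow> nat set" where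
  "ucomp n E v = {u. u < n \<and> (v, u) \<in> (E \<union> converse E)\<^sup>*}"

definition comp_merge :: "(nat \<Rightarrow> real) \<Rightarrow> nat \<Rightarrow> (nat \<times> nat) set \<Rightarrow> nat set \<Rightarrow> nat set \<Rightarrow> (nat \<times> nat) set" where
  "comp_merge A n E C D = zip_merge (2 * n + 2) A E C D (Some (minv A C)) (Some (minv A D))"

fun mstep_arcs :: "(nat \<Rightarrow> real) \<Rightarrow> nat \<Rightarrow> (nat \<times> nat) set \<Rightarrow> nat list \<Rightarrow> (nat \<times> nat) set" where
  "mstep_arcs A n E (a # b # rs) = comp_merge A n E (ucomp n E a) (ucomp n E b) \<union> mstep_arcs A n E rs"
| "mstep_arcs A n E _ = {}"

fun mstep_roots :: "(nat \<Rightarrow> real) \<Rightarrow> nat list \<Rightarrow> nat list" where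
  "mstep_roots A (a # b # rs) = (if A a < A b then a else b) # mstep_roots A rs"
| "mstep_roots A rs = rs"

definition merge_step :: "(nat \<Rightarrow> real) \<Rightarrow> nat \<Rightarrow> (nat \<times> nat) set \<Rightarrow> nat list \<Rightarrow> (nat \<times> nat) set \<times> nat list" where
  "merge_step A n E R = (E \<union> mstep_arcs A n E R, mstep_roots A R)"

text \<open>One round: merge step on (graph, root list), then DFS of the result with visiting
  list the new root list. Returns (F_i, R_i).\<close>
definition merge_round :: "(nat \<Rightarrow> real) \<Rightarrow> nat \<Rightarrow> (nat \<times> nat) set \<times> nat list \<Rightarrow> (nat \<times> nat) set \<times> nat list" where
  "merge_round A n st = (let (H, R) = merge_step A n (fst st) (snd st) in (dfs_forest A n H R, R))"

definition one_component :: "nat \<Rightarrow> (nat \<times> nat) set \<Rightarrow> bool" where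
  "one_component n E \<longleftrightarrow> n > 0 \<and> (\<forall>u<n. \<forall>v<n. (u, v) \<in> (E \<union> converse E)\<^sup>*)"

end

theory Submission
  imports Defs
begin

text \<open>
  Every round preserves an invariant of the pair \<open>(T, R)\<close> of graph and root list: the arcs
  of \<open>T\<close> increase \<open>A\<close>, every vertex is reachable in \<open>T\<close> from a root in \<open>R\<close>, and every root is
  the \<open>A\<close>-minimum of its undirected component (so distinct roots lie in distinct components).
  The component merge of a pair therefore starts at the two roots and adds the arc from the
  surviving root to the other one, so the surviving roots still reach every vertex; and merge
  arcs never leave the union of the paired components, so no surviving root reaches another.
  Consequently the DFS visiting the surviving roots leaves each of them without a parent and
  produces a forest of trees rooted exactly at them, which restores the invariant. Each round
  halves the number of roots (rounded up), so eventually a single root remains, whose tree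
  spans all vertices. The invariant holds at the start because the DFS forest of the reach-one
  graph is a forest of increasing arcs, and merging its sub-trees adds increasing arcs inside
  single trees only.
\<close>

section \<open>Depth-first search\<close>

lemma set_out_sorted: "set (out_sorted A n E u) = {w. w < n \<and> (u, w) \<in> E}"
  unfolding out_sorted_def by auto

lemma fold_guarded_visit:
  fixes step :: "'a \<Rightarrow> 'a set \<times> 'b \<Rightarrow> 'a set \<times> 'b"
  assumes step: "\<And>w s. P s \<Longrightarrow> w \<in> W \<Longrightarrow> w \<notin> fst s \<Longrightarrow>
      P (step w s) \<and> insert w (fst s) \<subseteq> fst (step w s) \<and>
      E `` (fst (step w s) - fst s) \<subseteq> fst (step w s)"
  defines "g \<equiv> \<lambda>w s. if w \<in> fst s then s else step w s"
  shows "P s \<Longrightarrow> set ws \<subseteq> W \<Longrightarrow>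
    P (fold g ws s) \<and> fst s \<union> set ws \<subseteq> fst (fold g ws s) \<and>
    E `` (fst (fold g ws s) - fst s) \<subseteq> fst (fold g ws s)"
proof (induction ws arbitrary: s)
  case (Cons w ws)
  have s1: "P (g w s)" "insert w (fst s) \<subseteq> fst (g w s)"
      "E `` (fst (g w s) - fst s) \<subseteq> fst (g w s)"
    unfolding g_def using step[of s w] Cons.prems by auto
  define F where "F = fold g ws (g w s)"
  have IH: "P F" "fst (g w s) \<union> set ws \<subseteq> fst F" "E `` (fst F - fst (g w s)) \<subseteq> fst F"
    using Cons.IH[of "g w s"] s1(1) Cons.prems(2) unfolding F_def by simp_all
  have "E `` (fst F - fst s) \<subseteq> fst F" using IH(2,3) s1(3) by blast
  moreover have "fold g (w # ws) s = F" by (simp add: F_def)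
  ultimately show ?case using IH s1 by auto
qed simp

definition dfs_inv :: "(nat \<times> nat) set \<Rightarrow> nat set \<Rightarrow> nat set \<times> (nat \<times> nat) set \<Rightarrow> bool" where
  "dfs_inv E R st \<longleftrightarrow> snd st \<subseteq> E \<inter> (fst st \<times> fst st) \<and> acyclic (snd st) \<and>
     single_valued ((snd st)\<inverse>) \<and> fst st \<subseteq> (snd st)\<^sup>* `` R"

lemma dfs_inv_start: "dfs_inv E R (V, T) \<Longrightarrow> l \<in> R \<Longrightarrow> dfs_inv E R (insert l V, T)"
  unfolding dfs_inv_def by auto

lemma dfs_inv_arc:
  assumes inv: "dfs_inv E R (V, T)" and "u \<in> V" "w \<notin> V" "(u, w) \<in> E"
  shows "dfs_inv E R (insert w V, insert (u, w) T)"
proof -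
  have T: "T \<subseteq> E \<inter> (V \<times> V)" "acyclic T" "single_valued (T\<inverse>)" "V \<subseteq> T\<^sup>* `` R"
    using inv unfolding dfs_inv_def by auto
  have "(w, u) \<notin> T\<^sup>*"
  proof
    assume "(w, u) \<in> T\<^sup>*"
    then show False
      by (cases rule: converse_rtranclE) (use T(1) assms(2,3) in auto)
  qed
  then have "acyclic (insert (u, w) T)" using T(2) by simp
  moreover have "single_valued ((insert (u, w) T)\<inverse>)"
    using T(1,3) assms(3) unfolding single_valued_def by auto
  moreover have "insert w V \<subseteq> (insert (u, w) T)\<^sup>* `` R"
  proof -
    have mono: "T\<^sup>* `` R \<subseteq> (insert (u, w) T)\<^sup>* `` R"
      by (intro Image_mono rtrancl_mono) auto
    obtain l where "l \<in> R" "(l, u) \<in> (insert (u, w) T)\<^sup>*"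
      using T(4) assms(2) mono by blast
    then have "w \<in> (insert (u, w) T)\<^sup>* `` R"
      by (meson ImageI insertI1 rtrancl.rtrancl_into_rtrancl)
    then show ?thesis using T(4) mono by blast
  qed
  ultimately show ?thesis
    using T(1) assms unfolding dfs_inv_def by auto
qed

lemma dfs_visit_correct:
  assumes E: "E \<subseteq> {..<n} \<times> {..<n}"
  shows "dfs_inv E R (insert u V, T) \<Longrightarrow> u \<notin> V \<Longrightarrow> u < n \<Longrightarrow> card ({..<n} - V) < K \<Longrightarrow>
    dfs_inv E R (dfs_visit K A n E u (V, T)) \<and> insert u V \<subseteq> fst (dfs_visit K A n E u (V, T)) \<and>
    E `` (fst (dfs_visit K A n E u (V, T)) - V) \<subseteq> fst (dfs_visit K A n E u (V, T))"
proof (induction K arbitrary: u V T)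
  case (Suc k)
  let ?P = "\<lambda>s. dfs_inv E R s \<and> insert u V \<subseteq> fst s"
  let ?step = "\<lambda>w s. dfs_visit k A n E w (fst s, insert (u, w) (snd s))"
  have card_less: "card ({..<n} - insert u V) < k"
  proof -
    have "{..<n} - insert u V \<subset> {..<n} - V" using Suc.prems(2,3) by auto
    then have "card ({..<n} - insert u V) < card ({..<n} - V)" by (intro psubset_card_mono) auto
    then show ?thesis using Suc.prems(4) by simp
  qed
  have step: "?P (?step w s) \<and> insert w (fst s) \<subseteq> fst (?step w s) \<and>
      E `` (fst (?step w s) - fst s) \<subseteq> fst (?step w s)"
    if s: "?P s" and w: "w \<in> E `` {u}" "w \<notin> fst s" for w s
  proof -
    obtain V1 T1 where s_eq: "s = (V1, T1)" by fastforce
    have "card ({..<n} - V1) \<le> card ({..<n} - insert u V)"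
      using s s_eq by (intro card_mono) auto
    then have "card ({..<n} - V1) < k" using card_less by simp
    moreover have "dfs_inv E R (insert w V1, insert (u, w) T1)"
      using dfs_inv_arc[of E R V1 T1 u w] s w s_eq by auto
    moreover have "w < n" using w E by auto
    ultimately show ?thesis
      using Suc.IH[of w V1 "insert (u, w) T1"] s w s_eq by auto
  qed
  define g where "g = (\<lambda>w s. if w \<in> fst s then s else ?step w s)"
  define F where "F = fold g (out_sorted A n E u) (insert u V, T)"
  have visit: "dfs_visit (Suc k) A n E u (V, T) = F" by (simp add: F_def g_def)
  have out: "set (out_sorted A n E u) = E `` {u}" using E by (auto simp: set_out_sorted)
  have "?P F \<and> fst (insert u V, T) \<union> set (out_sorted A n E u) \<subseteq> fst F \<and>
      E `` (fst F - fst (insert u V, T)) \<subseteq> fst F"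
    unfolding F_def g_def
    by (rule fold_guarded_visit[where W = "E `` {u}"]) (use step Suc.prems out in auto)
  then have "?P F" and grow: "insert u V \<union> E `` {u} \<subseteq> fst F"
    and closed: "E `` (fst F - insert u V) \<subseteq> fst F"
    unfolding out by simp_all
  moreover have "E `` (fst F - V) \<subseteq> fst F" using grow closed by blast
  ultimately show ?case unfolding visit by blast
qed simp

lemma dfs_forest_props:
  fixes A :: "nat \<Rightarrow> real"
  assumes E: "E \<subseteq> {..<n} \<times> {..<n}" and L: "set L \<subseteq> {..<n}"
  defines "T \<equiv> dfs_forest A n E L"
  shows "T \<subseteq> E" "acyclic T" "single_valued (T\<inverse>)" "Domain T \<subseteq> T\<^sup>* `` set L"
    and "E\<^sup>* `` set L \<subseteq> T\<^sup>* `` set L"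
proof -
  let ?visit = "dfs_visit (Suc n) A n E"
  define st where "st = fold (\<lambda>l s. if l \<in> fst s then s else ?visit l s) L ({}, {})"
  have visit_step: "dfs_inv E (set L) (?visit l s) \<and> insert l (fst s) \<subseteq> fst (?visit l s) \<and>
      E `` (fst (?visit l s) - fst s) \<subseteq> fst (?visit l s)"
    if "dfs_inv E (set L) s" "l \<in> set L" "l \<notin> fst s" for l s
  proof -
    obtain V0 T0 where s: "s = (V0, T0)" by fastforce
    have "card ({..<n} - V0) < Suc n"
      using card_mono[of "{..<n}" "{..<n} - V0"] by auto
    moreover have "dfs_inv E (set L) (insert l V0, T0)" using dfs_inv_start that s by blast
    ultimately show ?thesis
      using dfs_visit_correct[OF E, of "set L" l V0 T0 "Suc n" A] that L s by auto
  qed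
  have init: "dfs_inv E (set L) ({}, {})" by (simp add: dfs_inv_def acyclic_def)
  have "dfs_inv E (set L) st \<and> set L \<subseteq> fst st \<and> E `` fst st \<subseteq> fst st"
    using fold_guarded_visit[where W = "set L", OF visit_step init, of L] unfolding st_def by simp
  then have inv: "dfs_inv E (set L) (fst st, T)" and "set L \<subseteq> fst st" and "E `` fst st \<subseteq> fst st"
    unfolding T_def dfs_forest_def st_def by auto
  then have "E\<^sup>* `` set L \<subseteq> fst st"
    using Image_closed_trancl[of E "fst st"] Image_mono[of "E\<^sup>*" "E\<^sup>*" "set L" "fst st"] by auto
  with inv show "T \<subseteq> E" "acyclic T" "single_valued (T\<inverse>)" "Domain T \<subseteq> T\<^sup>* `` set L"
    and "E\<^sup>* `` set L \<subseteq> T\<^sup>* `` set L"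
    unfolding dfs_inv_def by auto
qed

lemma dfs_forest_no_parent:
  assumes E: "E \<subseteq> {..<n} \<times> {..<n}" and L: "set L \<subseteq> {..<n}"
    and unreached: "\<forall>l\<in>set L. (l, r) \<in> E\<^sup>* \<longrightarrow> l = r"
  shows "(p, r) \<notin> dfs_forest A n E L"
proof
  let ?T = "dfs_forest A n E L"
  assume pr: "(p, r) \<in> ?T"
  then have "p \<in> ?T\<^sup>* `` set L" using dfs_forest_props(4)[OF E L] by blast
  then obtain l where l: "l \<in> set L" "(l, p) \<in> ?T\<^sup>*" by blast
  have lr: "(l, r) \<in> ?T\<^sup>+" using l(2) pr by (rule rtrancl_into_trancl1)
  then have "(l, r) \<in> E\<^sup>+" by (rule trancl_mono) (rule dfs_forest_props(1)[OF E L])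
  then have "l = r" using unreached l(1) by (blast dest: trancl_into_rtrancl)
  with lr show False using dfs_forest_props(2)[OF E L] by (simp add: acyclic_def)
qed

section \<open>Forests\<close>

lemma forest_root_unique:
  assumes forest: "single_valued (F\<inverse>)" and roots: "\<forall>p. (p, r) \<notin> F" "\<forall>p. (p, r') \<notin> F"
    and paths: "(r, x) \<in> F\<^sup>*" "(r', x) \<in> F\<^sup>*"
  shows "r = r'"
  using paths
proof (induction rule: rtrancl_induct)
  case base
  then show ?case by (cases rule: rtranclE) (use roots(1) in auto)
next
  case (step y z)
  from step.prems show ?case
  proof (cases rule: rtranclE)
    case base
    then show ?thesis using step.hyps(2) roots(2) by auto
  next
    case (step y')
    then have "y' = y" using forest \<open>(y, z) \<in> F\<close> unfolding single_valued_def by blast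
    then show ?thesis using step.IH step by blast
  qed
qed

lemma component_of_root_in_tree:
  assumes forest: "single_valued (F\<inverse>)" and root: "\<forall>p. (p, r) \<notin> F" and "F \<subseteq> E"
    and extra: "\<And>x y. (x, y) \<in> E - F \<Longrightarrow>
      \<exists>r'. (\<forall>p. (p, r') \<notin> F) \<and> (r', x) \<in> F\<^sup>* \<and> (r', y) \<in> F\<^sup>*"
    and "(r, v) \<in> (E \<union> E\<inverse>)\<^sup>*"
  shows "(r, v) \<in> F\<^sup>*"
proof -
  let ?W = "F\<^sup>* `` {r}"
  have "(E \<union> E\<inverse>) `` ?W \<subseteq> ?W"
  proof
    fix y assume "y \<in> (E \<union> E\<inverse>) `` ?W"
    then obtain x where x: "(r, x) \<in> F\<^sup>*" and xy: "(x, y) \<in> E \<or> (y, x) \<in> E" by blast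
    consider "(x, y) \<in> F" | "(y, x) \<in> F" | "(x, y) \<in> E - F \<or> (y, x) \<in> E - F"
      using xy by blast
    then show "y \<in> ?W"
    proof cases
      case 1
      then show ?thesis using x by auto
    next
      case 2
      from x show ?thesis
      proof (cases rule: rtranclE)
        case base
        then show ?thesis using 2 root by auto
      next
        case (step z)
        then have "z = y" using forest 2 unfolding single_valued_def by blast
        then show ?thesis using step by simp
      qed
    next
      case 3
      then obtain r' where r': "\<forall>p. (p, r') \<notin> F" "(r', x) \<in> F\<^sup>*" "(r', y) \<in> F\<^sup>*"
        using extra by blast
      then have "r' = r" using forest_root_unique[OF forest r'(1) root r'(2) x] by simp
      then show ?thesis using r' by simp
    qed
  qed
  then have "(E \<union> E\<inverse>)\<^sup>* `` ?W = ?W" by (rule Image_closed_trancl)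
  then show ?thesis using assms(5) by blast
qed

lemma monotone_along_rtrancl:
  fixes A :: "'a \<Rightarrow> 'b :: order"
  assumes "\<forall>(x, y)\<in>E. A x \<le> A y" "(a, b) \<in> E\<^sup>*"
  shows "A a \<le> A b"
  using assms(2) by induction (use assms(1) order_trans in auto)

lemma finite_acyclic_rootE:
  assumes "finite F" "acyclic F"
  obtains r where "(r, v) \<in> F\<^sup>*" "\<forall>p. (p, r) \<notin> F"
proof -
  have "wf F" using assms by (rule finite_acyclic_wf)
  then obtain r where r: "r \<in> {u. (u, v) \<in> F\<^sup>*}"
    and min: "\<And>y. (y, r) \<in> F \<Longrightarrow> y \<notin> {u. (u, v) \<in> F\<^sup>*}"
    using wfE_min[where x = v and Q = "{u. (u, v) \<in> F\<^sup>*}"] by blast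
  then have "\<forall>p. (p, r) \<notin> F" by (auto intro: converse_rtrancl_into_rtrancl)
  then show ?thesis using that r by blast
qed

section \<open>Merging\<close>

lemma min_out_SomeD:
  assumes "finite C" "min_out A E C p = Some w"
  shows "w \<in> C \<and> (p, w) \<in> E"
proof -
  let ?S = "{w \<in> C. (p, w) \<in> E}"
  have "?S \<noteq> {}" and "w = arg_min_on A ?S"
    using assms(2) unfolding min_out_def minv_def Let_def by (auto split: if_splits)
  then show ?thesis using arg_min_if_finite(1)[of ?S A] assms(1) by simp
qed

lemma zip_merge_subset:
  assumes closed_C: "\<And>x w. x \<in> S \<Longrightarrow> min_out A E C x = Some w \<Longrightarrow> w \<in> S"
    and closed_D: "\<And>x w. x \<in> S \<Longrightarrow> min_out A E D x = Some w \<Longrightarrow> w \<in> S"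
  shows "set_option po \<subseteq> S \<Longrightarrow> set_option qo \<subseteq> S \<Longrightarrow>
    zip_merge k A E C D po qo \<subseteq> {(x, y). x \<in> S \<and> y \<in> S \<and> A x \<le> A y}"
  (is "_ \<Longrightarrow> _ \<Longrightarrow> _ \<subseteq> ?arcs")
proof (induction k arbitrary: po qo)
  case (Suc k)
  show ?case
  proof (cases "\<exists>p q. po = Some p \<and> qo = Some q")
    case True
    then obtain p q where pq: "po = Some p" "qo = Some q" by blast
    with Suc.prems have p: "p \<in> S" and q: "q \<in> S" by auto
    have "zip_merge k A E C D (min_out A E C p) (Some q) \<subseteq> ?arcs"
      using Suc.IH[of "min_out A E C p" "Some q"] closed_C[OF p] q by fastforce
    moreover have "zip_merge k A E C D (Some p) (min_out A E D q) \<subseteq> ?arcs"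
      using Suc.IH[of "Some p" "min_out A E D q"] closed_D[OF q] p by fastforce
    ultimately show ?thesis using p q pq by auto
  next
    case False
    then show ?thesis by (cases po; cases qo) auto
  qed
qed simp

lemma arg_max_on_in:
  fixes f :: "'a \<Rightarrow> 'b :: linorder"
  assumes "finite S" "S \<noteq> {}"
  shows "arg_max_on f S \<in> S"
proof -
  have "Max (f ` S) \<in> f ` S" using assms by (intro Max_in) auto
  then obtain x where x: "x \<in> S" "f x = Max (f ` S)" by (metis imageE)
  have "\<not> f y > f x" if "y \<in> S" for y
  proof -
    have "f y \<le> Max (f ` S)" using assms(1) that by (intro Max_ge) auto
    then show ?thesis using x(2) by simp
  qed
  then show ?thesis
    unfolding arg_max_on_def by (rule arg_maxI[of "\<lambda>x. x \<in> S", OF x(1)])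
qed

lemma merge_subtrees_arc:
  assumes "(x, y) \<in> merge_subtrees A n F - F"
  shows "\<exists>r<n. (\<forall>p. (p, r) \<notin> F) \<and> (r, x) \<in> F\<^sup>* \<and> (r, y) \<in> F\<^sup>* \<and> A x \<le> A y"
proof -
  obtain r where r: "r < n" "\<forall>p. (p, r) \<notin> F" "card (children F r) = 2"
    and xy: "(x, y) \<in> zip_merge (2 * n + 2) A F {..<n} {..<n}
      (Some (minv A (children F r))) (Some (arg_max_on A (children F r)))"
    using assms unfolding merge_subtrees_def Let_def by auto
  let ?W = "F\<^sup>* `` {r}"
  have fin: "finite (children F r)" "children F r \<noteq> {}"
    using r(3) by (auto intro: card_ge_0_finite)
  have "children F r \<subseteq> ?W" unfolding children_def by auto
  then have "minv A (children F r) \<in> ?W" "arg_max_on A (children F r) \<in> ?W"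
    using arg_min_if_finite(1)[OF fin] arg_max_on_in[OF fin] unfolding minv_def by auto
  moreover have "w \<in> ?W" if "z \<in> ?W" "min_out A F {..<n} z = Some w" for z w
    using min_out_SomeD[OF _ that(2)] that(1) by (auto intro: rtrancl.rtrancl_into_rtrancl)
  ultimately have "zip_merge (2 * n + 2) A F {..<n} {..<n}
      (Some (minv A (children F r))) (Some (arg_max_on A (children F r)))
      \<subseteq> {(x, y). x \<in> ?W \<and> y \<in> ?W \<and> A x \<le> A y}"
    by (intro zip_merge_subset) auto
  then show ?thesis using xy r(1,2) by blast
qed

fun survivor :: "(nat \<Rightarrow> real) \<Rightarrow> nat list \<Rightarrow> nat \<Rightarrow> nat" where
  "survivor A (a # b # rs) x = (if x = a \<or> x = b then (if A a < A b then a else b) else survivor A rs x)"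
| "survivor A rs x = x"

lemma set_mstep_roots_subset: "set (mstep_roots A R) \<subseteq> set R"
  by (induction A R rule: mstep_roots.induct) auto

lemma survivor_in_mstep_roots: "x \<in> set R \<Longrightarrow> survivor A R x \<in> set (mstep_roots A R)"
  by (induction A R rule: mstep_roots.induct) auto

lemma survivor_mstep_root: "distinct R \<Longrightarrow> r \<in> set (mstep_roots A R) \<Longrightarrow> survivor A R r = r"
proof (induction A R rule: mstep_roots.induct)
  case (1 A a b rs)
  then show ?case using set_mstep_roots_subset[of A rs] by auto
qed auto

lemma survivor_le: "A (survivor A R x) \<le> A x"
  by (induction A R x rule: survivor.induct) auto

lemma distinct_mstep_roots: "distinct R \<Longrightarrow> distinct (mstep_roots A R)"
proof (induction A R rule: mstep_roots.induct)
  case (1 A a b rs)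
  then show ?case using set_mstep_roots_subset[of A rs] by auto
qed auto

lemma length_mstep_roots: "length (mstep_roots A R) = (length R + 1) div 2"
  by (induction A R rule: mstep_roots.induct) auto

lemma mstep_arcs_subset:
  assumes "distinct R" "arc \<in> mstep_arcs A n E R"
  shows "\<exists>a\<in>set R. \<exists>b\<in>set R. survivor A R a = survivor A R b \<and>
    arc \<in> comp_merge A n E (ucomp n E a) (ucomp n E b)"
  using assms
proof (induction A n E R rule: mstep_arcs.induct)
  case (1 A n E a b rs)
  show ?case
  proof (cases "arc \<in> comp_merge A n E (ucomp n E a) (ucomp n E b)")
    case True
    then show ?thesis by auto
  next
    case False
    then have "arc \<in> mstep_arcs A n E rs" using "1.prems"(2) by simp
    then obtain a' b' where ab: "a' \<in> set rs" "b' \<in> set rs" "survivor A rs a' = survivor A rs b'"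
        "arc \<in> comp_merge A n E (ucomp n E a') (ucomp n E b')"
      using "1.IH" "1.prems"(1) by auto
    moreover have "a' \<notin> {a, b}" "b' \<notin> {a, b}" using ab(1,2) "1.prems"(1) by auto
    ultimately show ?thesis by (intro bexI[of _ a'] bexI[of _ b']) auto
  qed
qed auto

lemma mstep_arcs_merge_with_survivor:
  "x \<in> set R \<Longrightarrow> survivor A R x \<noteq> x \<Longrightarrow>
    \<exists>a b. comp_merge A n E (ucomp n E a) (ucomp n E b) \<subseteq> mstep_arcs A n E R \<and>
      (a = x \<and> b = survivor A R x \<or> a = survivor A R x \<and> b = x)"
proof (induction A n E R rule: mstep_arcs.induct)
  case (1 A n E a b rs)
  show ?case
  proof (cases "x = a \<or> x = b")
    case True
    then show ?thesis using "1.prems"(2) by (intro exI[of _ a] exI[of _ b]) (auto split: if_splits)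
  next
    case False
    then show ?thesis using 1 by fastforce
  qed
qed auto

section \<open>The merge rounds\<close>

definition merge_inv :: "(nat \<Rightarrow> real) \<Rightarrow> nat \<Rightarrow> (nat \<times> nat) set \<Rightarrow> nat list \<Rightarrow> bool" where
  "merge_inv A n T R \<longleftrightarrow> T \<subseteq> {..<n} \<times> {..<n} \<and> (\<forall>(x, y)\<in>T. A x \<le> A y) \<and>
     distinct R \<and> R \<noteq> [] \<and> set R \<subseteq> {..<n} \<and> {..<n} \<subseteq> T\<^sup>* `` set R \<and>
     (\<forall>r\<in>set R. \<forall>v\<in>ucomp n T r. A r \<le> A v)"

lemma merge_round_eq:
  "merge_round A n (T, R) =
    (dfs_forest A n (T \<union> mstep_arcs A n T R) (mstep_roots A R), mstep_roots A R)"
  unfolding merge_round_def merge_step_def by simp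

lemma ucomp_subset: "ucomp n E r \<subseteq> {..<n}"
  unfolding ucomp_def by auto

lemma root_in_ucomp: "r < n \<Longrightarrow> r \<in> ucomp n E r"
  unfolding ucomp_def by auto

context
  fixes A :: "nat \<Rightarrow> real" and n :: nat and T :: "(nat \<times> nat) set" and R :: "nat list"
  assumes inv: "merge_inv A n T R" and inj: "inj_on A {..<n}"
begin

lemma ucomp_root_unique:
  assumes r: "r1 \<in> set R" "r2 \<in> set R" and x: "x \<in> ucomp n T r1" "x \<in> ucomp n T r2"
  shows "r1 = r2"
proof -
  have R: "set R \<subseteq> {..<n}" and min: "\<forall>r\<in>set R. \<forall>v\<in>ucomp n T r. A r \<le> A v"
    using inv unfolding merge_inv_def by auto
  have sym: "sym ((T \<union> T\<inverse>)\<^sup>*)" by (rule sym_rtrancl[OF sym_Un_converse])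
  have paths: "(r1, x) \<in> (T \<union> T\<inverse>)\<^sup>*" "(r2, x) \<in> (T \<union> T\<inverse>)\<^sup>*"
    using x unfolding ucomp_def by auto
  have "(r1, r2) \<in> (T \<union> T\<inverse>)\<^sup>*"
    using paths(1) symD[OF sym paths(2)] by (rule rtrancl_trans)
  moreover have "(r2, r1) \<in> (T \<union> T\<inverse>)\<^sup>*"
    using paths(2) symD[OF sym paths(1)] by (rule rtrancl_trans)
  ultimately have "r2 \<in> ucomp n T r1" "r1 \<in> ucomp n T r2"
    using r R unfolding ucomp_def by auto
  then have "A r1 = A r2" using min r by (meson order_antisym)
  then show ?thesis using inj r R by (auto dest: inj_onD)
qed

lemma minv_ucomp_root:
  assumes "r \<in> set R"
  shows "minv A (ucomp n T r) = r"
proof -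
  have "r < n" and min: "\<forall>v\<in>ucomp n T r. A r \<le> A v"
    using inv assms unfolding merge_inv_def by auto
  have "inj_on A {x. x \<in> ucomp n T r}" using inj_on_subset[OF inj ucomp_subset] by simp
  then show ?thesis
    unfolding minv_def arg_min_on_def using arg_min_inj_eq root_in_ucomp[OF \<open>r < n\<close>] min by metis
qed

lemma mstep_arc_within_merged_pair:
  assumes "(x, y) \<in> mstep_arcs A n T R"
  obtains a b where "a \<in> set R" "b \<in> set R" "survivor A R a = survivor A R b"
    "x \<in> ucomp n T a \<union> ucomp n T b" "y \<in> ucomp n T a \<union> ucomp n T b" "A x \<le> A y"
proof -
  have "distinct R" and R: "set R \<subseteq> {..<n}" using inv unfolding merge_inv_def by auto
  then obtain a b where ab: "a \<in> set R" "b \<in> set R" "survivor A R a = survivor A R b"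
    and arc: "(x, y) \<in> comp_merge A n T (ucomp n T a) (ucomp n T b)"
    using mstep_arcs_subset assms by blast
  let ?S = "ucomp n T a \<union> ucomp n T b"
  have fin: "finite (ucomp n T c)" for c using finite_subset[OF ucomp_subset] by blast
  have roots: "a \<in> ?S" "b \<in> ?S" using root_in_ucomp ab(1,2) R by auto
  have "comp_merge A n T (ucomp n T a) (ucomp n T b) =
      zip_merge (2 * n + 2) A T (ucomp n T a) (ucomp n T b) (Some a) (Some b)"
    unfolding comp_merge_def using minv_ucomp_root ab(1,2) by simp
  also have "\<dots> \<subseteq> {(x, y). x \<in> ?S \<and> y \<in> ?S \<and> A x \<le> A y}"
    by (rule zip_merge_subset) (use min_out_SomeD[OF fin] roots in blast)+
  finally show ?thesis using that ab arc by blast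
qed

lemma survivor_arc:
  assumes a: "a \<in> set R" "survivor A R a \<noteq> a"
  shows "(survivor A R a, a) \<in> mstep_arcs A n T R"
proof -
  let ?s = "survivor A R a"
  obtain c d where sub: "comp_merge A n T (ucomp n T c) (ucomp n T d) \<subseteq> mstep_arcs A n T R"
    and cd: "c = a \<and> d = ?s \<or> c = ?s \<and> d = a"
    using mstep_arcs_merge_with_survivor[OF a] by blast
  have s: "?s \<in> set R" using survivor_in_mstep_roots[OF a(1)] set_mstep_roots_subset by blast
  have "set R \<subseteq> {..<n}" using inv unfolding merge_inv_def by simp
  then have "A ?s \<noteq> A a" using inj_onD[OF inj] a s by blast
  then have lt: "A ?s < A a" using survivor_le[of A R a] by simp
  have fuel: "2 * n + 2 = Suc (2 * n + 1)" by simp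
  have "minv A (ucomp n T c) = c" "minv A (ucomp n T d) = d"
    using minv_ucomp_root cd a(1) s by auto
  then have "(if A c < A d then (c, d) else (d, c)) \<in> comp_merge A n T (ucomp n T c) (ucomp n T d)"
    unfolding comp_merge_def fuel by simp
  then show ?thesis using sub cd lt by auto
qed

lemma merged_roots_unreachable:
  assumes r: "r \<in> set (mstep_roots A R)" "r' \<in> set (mstep_roots A R)"
    and path: "(r', r) \<in> (T \<union> mstep_arcs A n T R)\<^sup>*"
  shows "r' = r"
proof -
  let ?s = "survivor A R" and ?H = "T \<union> mstep_arcs A n T R"
  have T: "T \<subseteq> {..<n} \<times> {..<n}" and "distinct R" and R: "set R \<subseteq> {..<n}"
    using inv unfolding merge_inv_def by auto
  have rR: "r \<in> set R" "r' \<in> set R" using r set_mstep_roots_subset by blast+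
  have fixed: "?s r = r" "?s r' = r'" using r survivor_mstep_root \<open>distinct R\<close> by blast+
  txt \<open>Merge arcs only join components whose roots share their survivor, so the union of
    the components with survivor \<open>r'\<close> is closed under the arcs of the merged graph.\<close>
  define U where "U = (\<Union>c\<in>{c \<in> set R. ?s c = r'}. ucomp n T c)"
  have "?H `` U \<subseteq> U"
  proof
    fix z assume "z \<in> ?H `` U"
    then obtain y c where c: "c \<in> set R" "?s c = r'" "y \<in> ucomp n T c" and yz: "(y, z) \<in> ?H"
      unfolding U_def by blast
    show "z \<in> U"
    proof (cases "(y, z) \<in> T")
      case True
      then have "z \<in> ucomp n T c"
        using c(3) T unfolding ucomp_def by (auto intro: rtrancl.rtrancl_into_rtrancl)
      then show ?thesis using c(1,2) unfolding U_def by blast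
    next
      case False
      then have "(y, z) \<in> mstep_arcs A n T R" using yz by blast
      then obtain a b where ab: "a \<in> set R" "b \<in> set R" "?s a = ?s b"
        "y \<in> ucomp n T a \<union> ucomp n T b" "z \<in> ucomp n T a \<union> ucomp n T b"
        by (rule mstep_arc_within_merged_pair)
      have "c = a \<or> c = b" using ucomp_root_unique c(1,3) ab(1,2,4) by blast
      then have "?s a = r'" "?s b = r'" using c(2) ab(3) by auto
      then show ?thesis using ab(1,2,5) unfolding U_def by blast
    qed
  qed
  moreover have "r' \<in> U" using rR(2) fixed(2) root_in_ucomp R unfolding U_def by blast
  ultimately have "r \<in> U" using Image_closed_trancl path by blast
  then obtain c where "c \<in> set R" "?s c = r'" "r \<in> ucomp n T c" unfolding U_def by blast
  moreover have "r \<in> ucomp n T r" using root_in_ucomp rR(1) R by blast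
  ultimately show ?thesis using ucomp_root_unique[of r c r] rR(1) fixed(1) by blast
qed

lemma mstep_roots_reach_all: "{..<n} \<subseteq> (T \<union> mstep_arcs A n T R)\<^sup>* `` set (mstep_roots A R)"
proof
  let ?s = "survivor A R" and ?H = "T \<union> mstep_arcs A n T R"
  fix v assume "v \<in> {..<n}"
  then obtain c where c: "c \<in> set R" "(c, v) \<in> T\<^sup>*" using inv unfolding merge_inv_def by blast
  have cv: "(c, v) \<in> ?H\<^sup>*" using rtrancl_mono[of T ?H] c(2) by blast
  have "(?s c, c) \<in> ?H\<^sup>*"
    using survivor_arc[OF c(1)] by (cases "?s c = c") auto
  then have "(?s c, v) \<in> ?H\<^sup>*" using cv by (rule rtrancl_trans)
  then show "v \<in> ?H\<^sup>* `` set (mstep_roots A R)" using survivor_in_mstep_roots[OF c(1)] by blast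
qed

lemma merge_round_inv:
  "merge_inv A n (dfs_forest A n (T \<union> mstep_arcs A n T R) (mstep_roots A R)) (mstep_roots A R)"
proof -
  let ?H = "T \<union> mstep_arcs A n T R" and ?R' = "mstep_roots A R"
  let ?T' = "dfs_forest A n ?H ?R'"
  have T: "T \<subseteq> {..<n} \<times> {..<n}" "\<forall>(x, y)\<in>T. A x \<le> A y"
    and R: "distinct R" "R \<noteq> []" "set R \<subseteq> {..<n}"
    using inv unfolding merge_inv_def by auto
  have H: "?H \<subseteq> {..<n} \<times> {..<n}" "\<forall>(x, y)\<in>?H. A x \<le> A y"
  proof -
    have "x < n \<and> y < n \<and> A x \<le> A y" if xy: "(x, y) \<in> mstep_arcs A n T R" for x y
    proof -
      obtain a b where "a \<in> set R" "b \<in> set R" "survivor A R a = survivor A R b"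
        "x \<in> ucomp n T a \<union> ucomp n T b" "y \<in> ucomp n T a \<union> ucomp n T b" "A x \<le> A y"
        using xy by (rule mstep_arc_within_merged_pair)
      then show ?thesis using ucomp_subset by blast
    qed
    then show "?H \<subseteq> {..<n} \<times> {..<n}" "\<forall>(x, y)\<in>?H. A x \<le> A y" using T by auto
  qed
  have R': "set ?R' \<subseteq> {..<n}" "distinct ?R'" "?R' \<noteq> []"
  proof -
    show "set ?R' \<subseteq> {..<n}" using set_mstep_roots_subset R(3) by blast
    show "distinct ?R'" using distinct_mstep_roots R(1) by blast
    show "?R' \<noteq> []" using length_mstep_roots[of A R] R(2) by (cases R) auto
  qed
  note dfs = dfs_forest_props[OF H(1) R'(1), of A]
  have T'_mono: "\<forall>(x, y)\<in>?T'. A x \<le> A y" using dfs(1) H(2) by blast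
  have "{..<n} \<subseteq> ?T'\<^sup>* `` set ?R'" using mstep_roots_reach_all dfs(5) by (rule order_trans)
  moreover have "A r \<le> A v" if r: "r \<in> set ?R'" and v: "v \<in> ucomp n ?T' r" for r v
  proof -
    have "\<forall>l\<in>set ?R'. (l, r) \<in> ?H\<^sup>* \<longrightarrow> l = r" using merged_roots_unreachable r by blast
    then have "\<forall>p. (p, r) \<notin> ?T'" using dfs_forest_no_parent[OF H(1) R'(1)] by blast
    moreover have "(r, v) \<in> (?T' \<union> ?T'\<inverse>)\<^sup>*" using v unfolding ucomp_def by simp
    ultimately have "(r, v) \<in> ?T'\<^sup>*"
      by (intro component_of_root_in_tree[OF dfs(3)]) auto
    then show ?thesis by (rule monotone_along_rtrancl[OF T'_mono])
  qed
  moreover have "?T' \<subseteq> {..<n} \<times> {..<n}" using dfs(1) H(1) by (rule order_trans)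
  ultimately show ?thesis
    using T'_mono R' unfolding merge_inv_def by blast
qed

end

lemma merge_inv_single_root_one_component:
  assumes "merge_inv A n T [r]"
  shows "one_component n T"
proof -
  have "r < n" and reach: "{..<n} \<subseteq> T\<^sup>* `` {r}" using assms unfolding merge_inv_def by auto
  have sym: "sym ((T \<union> T\<inverse>)\<^sup>*)" by (rule sym_rtrancl[OF sym_Un_converse])
  have from_root: "(r, v) \<in> (T \<union> T\<inverse>)\<^sup>*" if "v < n" for v
    using reach that rtrancl_mono[of T "T \<union> T\<inverse>"] by blast
  have "(u, v) \<in> (T \<union> T\<inverse>)\<^sup>*" if "u < n" "v < n" for u v
    using symD[OF sym from_root[OF that(1)]] from_root[OF that(2)] by (rule rtrancl_trans)
  then show ?thesis unfolding one_component_def using \<open>r < n\<close> by auto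
qed

lemma merge_rounds_reach_one_component:
  assumes inj: "inj_on A {..<n}"
  shows "merge_inv A n T R \<Longrightarrow> \<exists>i\<ge>1. one_component n (fst ((merge_round A n ^^ i) (T, R)))"
proof (induction "length R" arbitrary: T R rule: less_induct)
  case less
  define R' where "R' = mstep_roots A R"
  define T' where "T' = dfs_forest A n (T \<union> mstep_arcs A n T R) R'"
  have round: "merge_round A n (T, R) = (T', R')"
    unfolding T'_def R'_def by (rule merge_round_eq)
  have inv': "merge_inv A n T' R'"
    unfolding T'_def R'_def using less.prems inj by (rule merge_round_inv)
  show ?case
  proof (cases "length R' = 1")
    case True
    then obtain r where "R' = [r]" by (auto simp: length_Suc_conv)
    then have "one_component n T'" using inv' merge_inv_single_root_one_component by blast
    then show ?thesis using round by (intro exI[of _ 1]) simp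
  next
    case False
    moreover have "R' \<noteq> []" using inv' unfolding merge_inv_def by simp
    ultimately have "length R' < length R"
      using length_mstep_roots[of A R] unfolding R'_def by (cases R) auto
    then obtain i where "i \<ge> 1" "one_component n (fst ((merge_round A n ^^ i) (T', R')))"
      using less.hyps inv' by blast
    moreover have "(merge_round A n ^^ Suc i) (T, R) = (merge_round A n ^^ i) (T', R')"
      by (simp only: funpow_Suc_right comp_apply round)
    ultimately show ?thesis by (intro exI[of _ "Suc i"]) auto
  qed
qed

lemma reach1_graph_subset: "reach1_graph A n \<subseteq> {..<n} \<times> {..<n}"
  unfolding reach1_graph_def by auto

lemma reach1_graph_increasing: "(x, y) \<in> reach1_graph A n \<Longrightarrow> A x < A y"
  unfolding reach1_graph_def by auto

lemma initial_merge_inv: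
  fixes A :: "nat \<Rightarrow> real"
  assumes "n \<ge> 1" "distinct L" "set L = {..<n}"
  defines "F \<equiv> dfs_forest A n (reach1_graph A n) L"
  shows "merge_inv A n (merge_subtrees A n F) (dfs_roots F L)"
proof -
  let ?H = "merge_subtrees A n F" and ?R = "dfs_roots F L"
  have "set L \<subseteq> {..<n}" using assms(3) by simp
  note dfs = dfs_forest_props[where A = A, OF reach1_graph_subset[of A n] this, folded F_def]
  have F: "F \<subseteq> {..<n} \<times> {..<n}" using dfs(1) reach1_graph_subset by blast
  have F_mono: "\<forall>(x, y)\<in>F. A x \<le> A y"
    using dfs(1) reach1_graph_increasing[of _ _ A n] by (auto intro: less_imp_le)
  have in_range: "x < n" if "(r, x) \<in> F\<^sup>*" "r < n" for r x
    using that by (cases rule: rtranclE) (use F in auto)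
  have roots: "set ?R = {r. r < n \<and> (\<forall>p. (p, r) \<notin> F)}"
    unfolding dfs_roots_def using assms(3) by auto
  have F_H: "F \<subseteq> ?H" unfolding merge_subtrees_def by blast
  have extra: "\<exists>r. (\<forall>p. (p, r) \<notin> F) \<and> (r, x) \<in> F\<^sup>* \<and> (r, y) \<in> F\<^sup>*"
    if "(x, y) \<in> ?H - F" for x y
    using merge_subtrees_arc[OF that] by blast
  have H: "?H \<subseteq> {..<n} \<times> {..<n}" "\<forall>(x, y)\<in>?H. A x \<le> A y"
  proof -
    have "x < n \<and> y < n \<and> A x \<le> A y" if "(x, y) \<in> ?H" for x y
    proof (cases "(x, y) \<in> F")
      case True
      then show ?thesis using F F_mono by auto
    next
      case False
      then show ?thesis using merge_subtrees_arc[of x y] that in_range by blast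
    qed
    then show "?H \<subseteq> {..<n} \<times> {..<n}" "\<forall>(x, y)\<in>?H. A x \<le> A y" by auto
  qed
  have reach: "{..<n} \<subseteq> F\<^sup>* `` set ?R"
  proof
    fix v assume v: "v \<in> {..<n}"
    have "finite F" using F by (rule finite_subset) simp
    then obtain r where r: "(r, v) \<in> F\<^sup>*" "\<forall>p. (p, r) \<notin> F"
      using dfs(2) by (rule finite_acyclic_rootE)
    have "r < n" using r(1) v F by (cases rule: converse_rtranclE) auto
    then show "v \<in> F\<^sup>* `` set ?R" using r roots by blast
  qed
  have min: "A r \<le> A v" if r: "r \<in> set ?R" and v: "v \<in> ucomp n ?H r" for r v
  proof -
    have "(r, v) \<in> F\<^sup>*"
      using component_of_root_in_tree[OF dfs(3) _ F_H extra] r v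
      unfolding roots ucomp_def by blast
    then show ?thesis by (rule monotone_along_rtrancl[OF F_mono])
  qed
  have "0 \<in> F\<^sup>* `` set ?R" using reach assms(1) by auto
  then have "?R \<noteq> []" by auto
  moreover have "distinct ?R" unfolding dfs_roots_def using assms(2) by simp
  moreover have "{..<n} \<subseteq> ?H\<^sup>* `` set ?R" using reach rtrancl_mono[OF F_H] by blast
  ultimately show ?thesis using H min roots unfolding merge_inv_def by auto
qed

theorem corollary5:
  fixes A :: "nat \<Rightarrow> real" and n :: nat and L :: "nat list"
  assumes "n \<ge> 1"
    and "inj_on A {..<n}"
    and "distinct L" and "set L = {..<n}"
  shows "let F = dfs_forest A n (reach1_graph A n) L;
             H' = merge_subtrees A n F;
             R0 = dfs_roots F L
         in one_component n F \<or>
            (\<exists>i\<ge>1. one_component n (fst ((merge_round A n ^^ i) (H', R0))))"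
  using merge_rounds_reach_one_component[OF assms(2) initial_merge_inv[OF assms(1,3,4)]]
  unfolding Let_def by blast

end
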